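(* Let $D\ge1$, let $\sigma_I,\sigma_E\in C^2(\mathbb{R}^D)$ and set $\Sigma:=\sigma_I-\sigma_E$. Assume that $\nabla^2_\Xi\Sigma(\Xi)>0$ (positive definite) for all $\Xi$ and that $\nabla_\Xi\Sigma:\mathbb{R}^D\to\mathbb{R}^D$ is onto. Let $G\in C^2(\mathbb{R}^D)$ be a function with $\nabla_\tau G(\tau)=-(\nabla_\Xi\Sigma)^{-1}(-\tau)$ for all $\tau\in\mathbb{R}^D$, and define $$\Psi(\Xi,\tau):=\sigma_I(\Xi)+\Xi\cdot\tau+G(\tau),\qquad (\Xi,\tau)\in\mathbb{R}^D\times\mathbb{R}^D .$$ Assume moreover that there are constants $\gamma_I>\gamma_v>0$ such that, for all $\Xi\in\mathbb{R}^D$, $$\nabla^2_\Xi\sigma_I(\Xi)\ \ge\ \gamma_I\,\mathbb{I}_D\ >\ \gamma_v\,\mathbb{I}_D\ \ge\ \nabla^2_\Xi\Sigma(\Xi)\ >\ 0$$ in the sense of symmetric matrices. Then there is $\delta>0$ such that $\nabla^2_{(\Xi,\tau)}\Psi(\Xi,\tau)\ge\delta\,\mathbb{I}_{2D}$ for all $(\Xi,\tau)\in\mathbb{R}^D\times\mathbb{R}^D$.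
   Context: Under the stated hypotheses $\nabla_\Xi\Sigma$ is a bijection of $\mathbb{R}^D$ with $C^1$ inverse $(\nabla_\Xi\Sigma)^{-1}$, whose Jacobian is symmetric, so a function $G$ with the stated gradient exists (unique up to an additive constant). $\mathbb{I}_k$ denotes the $k\times k$ identity matrix; inequalities between symmetric matrices are in the sense of quadratic forms. In the paper's application $D=19$ (three space dimensions) or $D=5$ (two space dimensions). *)

theory Defs
  imports "HOL-Analysis.Analysis"
begin

definition grad :: "('a::euclidean_space \<Rightarrow> real) \<Rightarrow> 'a \<Rightarrow> 'a" where
  "grad f x = (\<Sum>b\<in>Basis. frechet_derivative f (at x) b *\<^sub>R b)"

text \<open>Hessian at x, viewed as the linear map h \<mapsto> D(grad f)(x) h
  (i.e. multiplication by the Hessian matrix).\<close>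
definition hess :: "('a::euclidean_space \<Rightarrow> real) \<Rightarrow> 'a \<Rightarrow> 'a \<Rightarrow> 'a" where
  "hess f x = frechet_derivative (grad f) (at x)"

definition C2 :: "('a::euclidean_space \<Rightarrow> real) \<Rightarrow> bool" where
  "C2 f \<longleftrightarrow> (\<forall>x. f differentiable (at x)) \<and> (\<forall>x. grad f differentiable (at x)) \<and>
     (\<forall>u v. continuous_on UNIV (\<lambda>x. hess f x u \<bullet> v))"

definition ge_scalar :: "('a::real_inner \<Rightarrow> 'a) \<Rightarrow> real \<Rightarrow> bool" where
  "ge_scalar H c \<longleftrightarrow> (\<forall>v. c * (v \<bullet> v) \<le> v \<bullet> H v)"

definition le_scalar :: "('a::real_inner \<Rightarrow> 'a) \<Rightarrow> real \<Rightarrow> bool" where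
  "le_scalar H c \<longleftrightarrow> (\<forall>v. v \<bullet> H v \<le> c * (v \<bullet> v))"

definition pos_def :: "('a::real_inner \<Rightarrow> 'a) \<Rightarrow> bool" where
  "pos_def H \<longleftrightarrow> (\<forall>v. v \<noteq> 0 \<longrightarrow> 0 < v \<bullet> H v)"

end

theory Submission
  imports Defs
begin

text \<open>The Hessian of \<open>\<Psi>\<close> is the block operator \<open>(h, k) \<mapsto> (A h + k, h + B k)\<close> with
  \<open>A = \<nabla>\<^sup>2\<sigma>\<^sub>I \<ge> \<gamma>\<^sub>I\<close> and \<open>B = \<nabla>\<^sup>2G\<close>. Differentiating the identity \<open>\<nabla>\<Sigma>(-\<nabla>G(\<tau>)) = -\<tau>\<close>
  shows that \<open>B\<close> is the inverse of \<open>\<nabla>\<^sup>2\<Sigma>\<close> at \<open>-\<nabla>G(\<tau>)\<close>; since \<open>B\<close> is symmetric (Schwarz) and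
  \<open>0 \<le> \<nabla>\<^sup>2\<Sigma> \<le> \<gamma>\<^sub>v\<close>, this gives \<open>B \<ge> 1/\<gamma>\<^sub>v\<close>. For any \<open>t\<close> with \<open>\<gamma>\<^sub>v < t < \<gamma>\<^sub>I\<close> the cross term obeys
  \<open>2 h\<cdot>k \<ge> -t|h|\<^sup>2 - |k|\<^sup>2/t\<close>, so the block form is at least
  \<open>min (\<gamma>\<^sub>I - t) (1/\<gamma>\<^sub>v - 1/t) > 0\<close>.\<close>

lemma grad_inner_eq_frechet_derivative:
  fixes f :: "'a::euclidean_space \<Rightarrow> real"
  assumes "f differentiable (at x)"
  shows "grad f x \<bullet> h = frechet_derivative f (at x) h"
proof -
  let ?f' = "frechet_derivative f (at x)"
  have lin: "linear ?f'" using assms frechet_derivative_works has_derivative_linear by blast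
  have "grad f x \<bullet> h = (\<Sum>b\<in>Basis. ?f' b * (b \<bullet> h))"
    unfolding grad_def by (simp add: inner_sum_left)
  also have "\<dots> = ?f' (\<Sum>b\<in>Basis. (h \<bullet> b) *\<^sub>R b)"
    by (simp add: linear_sum[OF lin] linear_cmul[OF lin] inner_commute mult.commute)
  also have "\<dots> = ?f' h" by (simp add: euclidean_representation)
  finally show ?thesis .
qed

lemma has_derivative_grad:
  fixes f :: "'a::euclidean_space \<Rightarrow> real"
  assumes "f differentiable (at x)"
  shows "(f has_derivative (\<lambda>h. grad f x \<bullet> h)) (at x)"
  using assms frechet_derivative_works grad_inner_eq_frechet_derivative
  by (metis (no_types, lifting) ext)

lemma grad_eqI:
  fixes f :: "'a::euclidean_space \<Rightarrow> real"
  assumes "(f has_derivative (\<lambda>h. g \<bullet> h)) (at x)"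
  shows "grad f x = g"
proof -
  have "f differentiable (at x)" using assms differentiable_def by blast
  then have "grad f x \<bullet> h = g \<bullet> h" for h
    using grad_inner_eq_frechet_derivative frechet_derivative_at[OF assms] by metis
  then have "(grad f x - g) \<bullet> (grad f x - g) = 0" by (simp add: inner_diff_left)
  then show ?thesis by simp
qed

lemma grad_diff:
  fixes f g :: "'a::euclidean_space \<Rightarrow> real"
  assumes "f differentiable (at x)" "g differentiable (at x)"
  shows "grad (\<lambda>x. f x - g x) x = grad f x - grad g x"
  by (rule grad_eqI)
     (use has_derivative_diff[OF has_derivative_grad[OF assms(1)] has_derivative_grad[OF assms(2)]]
      in \<open>simp add: inner_diff_left\<close>)

lemma has_derivative_hess:
  fixes f :: "'a::euclidean_space \<Rightarrow> real"
  assumes "grad f differentiable (at x)"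
  shows "(grad f has_derivative hess f x) (at x)"
  using assms frechet_derivative_works hess_def by metis

lemma linear_hess:
  fixes f :: "'a::euclidean_space \<Rightarrow> real"
  assumes "grad f differentiable (at x)"
  shows "linear (hess f x)"
  using has_derivative_hess[OF assms] has_derivative_linear by blast

lemma C2_differentiable:
  assumes "C2 f"
  shows "f differentiable (at x)" and "grad f differentiable (at x)"
  using assms unfolding C2_def by auto

lemma has_real_derivative_along_line:
  fixes f :: "'a::euclidean_space \<Rightarrow> real"
  assumes "\<forall>x. f differentiable (at x)"
  shows "((\<lambda>s. f (a + s *\<^sub>R u)) has_real_derivative (grad f (a + s *\<^sub>R u) \<bullet> u)) (at s)"
proof -
  have "((\<lambda>s. a + s *\<^sub>R u) has_derivative (\<lambda>d. d *\<^sub>R u)) (at s)"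
    by (auto intro!: derivative_eq_intros)
  from has_derivative_compose[OF this has_derivative_grad] assms
  have "((\<lambda>s. f (a + s *\<^sub>R u)) has_derivative (\<lambda>d. d * (grad f (a + s *\<^sub>R u) \<bullet> u))) (at s)"
    by simp
  moreover have "(\<lambda>d. d * (grad f (a + s *\<^sub>R u) \<bullet> u)) = (*) (grad f (a + s *\<^sub>R u) \<bullet> u)"
    by (auto simp: mult.commute)
  ultimately show ?thesis unfolding has_field_derivative_def by simp
qed

lemma has_real_derivative_grad_along_line:
  fixes f :: "'a::euclidean_space \<Rightarrow> real"
  assumes "\<forall>x. grad f differentiable (at x)"
  shows "((\<lambda>r. grad f (a + r *\<^sub>R v) \<bullet> u) has_real_derivative (hess f (a + r *\<^sub>R v) v \<bullet> u)) (at r)"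
proof -
  have "((\<lambda>s. a + s *\<^sub>R v) has_derivative (\<lambda>d. d *\<^sub>R v)) (at r)"
    by (auto intro!: derivative_eq_intros)
  from has_derivative_compose[OF this has_derivative_hess] assms
  have "((\<lambda>s. grad f (a + s *\<^sub>R v)) has_derivative (\<lambda>d. hess f (a + r *\<^sub>R v) (d *\<^sub>R v))) (at r)"
    by simp
  then have "((\<lambda>s. grad f (a + s *\<^sub>R v) \<bullet> u)
      has_derivative (\<lambda>d. hess f (a + r *\<^sub>R v) (d *\<^sub>R v) \<bullet> u)) (at r)"
    by (auto intro!: derivative_eq_intros)
  moreover have "(\<lambda>d. hess f (a + r *\<^sub>R v) (d *\<^sub>R v) \<bullet> u) = (*) (hess f (a + r *\<^sub>R v) v \<bullet> u)"
    using linear_cmul[OF linear_hess, of f "a + r *\<^sub>R v"] assms by (auto simp: mult.commute)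
  ultimately show ?thesis unfolding has_field_derivative_def by simp
qed

lemma second_difference_mean_value:
  fixes f :: "'a::euclidean_space \<Rightarrow> real"
  assumes d1: "\<forall>x. f differentiable (at x)" and d2: "\<forall>x. grad f differentiable (at x)"
    and t: "0 < t"
  shows "\<exists>p. norm (p - x) \<le> t * (norm u + norm v) \<and>
     f (x + t *\<^sub>R u + t *\<^sub>R v) - f (x + t *\<^sub>R u) - f (x + t *\<^sub>R v) + f x = t * t * (hess f p v \<bullet> u)"
proof -
  define \<phi> where "\<phi> s = f ((x + t *\<^sub>R v) + s *\<^sub>R u) - f (x + s *\<^sub>R u)" for s
  have d\<phi>: "(\<phi> has_real_derivative
      (grad f ((x + t *\<^sub>R v) + s *\<^sub>R u) \<bullet> u - grad f (x + s *\<^sub>R u) \<bullet> u)) (at s)" for s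
    unfolding \<phi>_def by (intro derivative_intros has_real_derivative_along_line d1)
  obtain s where s: "0 < s" "s < t"
    and e1: "\<phi> t - \<phi> 0 = (t - 0) * (grad f ((x + t *\<^sub>R v) + s *\<^sub>R u) \<bullet> u - grad f (x + s *\<^sub>R u) \<bullet> u)"
    using MVT2[OF t d\<phi>] by metis
  define \<psi> where "\<psi> r = grad f ((x + s *\<^sub>R u) + r *\<^sub>R v) \<bullet> u" for r
  have d\<psi>: "(\<psi> has_real_derivative (hess f ((x + s *\<^sub>R u) + r *\<^sub>R v) v \<bullet> u)) (at r)" for r
    unfolding \<psi>_def by (intro has_real_derivative_grad_along_line d2)
  obtain r where r: "0 < r" "r < t"
    and e2: "\<psi> t - \<psi> 0 = (t - 0) * (hess f ((x + s *\<^sub>R u) + r *\<^sub>R v) v \<bullet> u)"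
    using MVT2[OF t d\<psi>] by metis
  have "norm ((x + s *\<^sub>R u + r *\<^sub>R v) - x) \<le> norm (s *\<^sub>R u) + norm (r *\<^sub>R v)"
    by (metis add_diff_cancel_left' add.assoc norm_triangle_ineq)
  also have "\<dots> \<le> t * norm u + t * norm v"
    using s r by (intro add_mono) (auto intro!: mult_right_mono)
  finally have n: "norm ((x + s *\<^sub>R u + r *\<^sub>R v) - x) \<le> t * (norm u + norm v)"
    by (simp add: distrib_left)
  have "f (x + t *\<^sub>R u + t *\<^sub>R v) - f (x + t *\<^sub>R u) - f (x + t *\<^sub>R v) + f x = \<phi> t - \<phi> 0"
    unfolding \<phi>_def by (simp add: add_ac)
  also have "\<dots> = t * (\<psi> t - \<psi> 0)"
    using e1 unfolding \<psi>_def by (simp add: add_ac)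
  also have "\<dots> = t * t * (hess f ((x + s *\<^sub>R u) + r *\<^sub>R v) v \<bullet> u)"
    using e2 by simp
  finally show ?thesis using n by blast
qed

lemma second_difference_quotient_tendsto_hess:
  fixes f :: "'a::euclidean_space \<Rightarrow> real"
  assumes "\<forall>x. f differentiable (at x)" "\<forall>x. grad f differentiable (at x)"
    and cont: "continuous_on UNIV (\<lambda>x. hess f x v \<bullet> u)"
  shows "((\<lambda>t. (f (x + t *\<^sub>R u + t *\<^sub>R v) - f (x + t *\<^sub>R u) - f (x + t *\<^sub>R v) + f x) / (t * t))
           \<longlongrightarrow> hess f x v \<bullet> u) (at_right 0)"
proof (rule tendstoI)
  fix e :: real
  assume "0 < e"
  with cont obtain d where d: "d > 0" "\<And>y. dist y x < d \<Longrightarrow> dist (hess f y v \<bullet> u) (hess f x v \<bullet> u) < e"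
    unfolding continuous_on_iff by (metis UNIV_I)
  have n: "norm u + norm v + 1 > 0" by (simp add: add_nonneg_pos)
  define b where "b = d / (norm u + norm v + 1)"
  have b: "b > 0" using d n by (simp add: b_def)
  have close: "dist ((f (x + t *\<^sub>R u + t *\<^sub>R v) - f (x + t *\<^sub>R u) - f (x + t *\<^sub>R v) + f x) / (t * t))
      (hess f x v \<bullet> u) < e" if t: "0 < t" "t < b" for t
  proof -
    obtain p where p: "norm (p - x) \<le> t * (norm u + norm v)"
      "f (x + t *\<^sub>R u + t *\<^sub>R v) - f (x + t *\<^sub>R u) - f (x + t *\<^sub>R v) + f x = t * t * (hess f p v \<bullet> u)"
      using second_difference_mean_value[OF assms(1,2) t(1)] by blast
    have "t * (norm u + norm v) < b * (norm u + norm v + 1)"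
      using t by (intro mult_strict_mono') auto
    then have "dist p x < d"
      using p(1) n by (simp add: b_def dist_norm)
    then show ?thesis using d(2) p(2) t(1) by simp
  qed
  show "\<forall>\<^sub>F t in at_right 0. dist ((f (x + t *\<^sub>R u + t *\<^sub>R v) - f (x + t *\<^sub>R u)
      - f (x + t *\<^sub>R v) + f x) / (t * t)) (hess f x v \<bullet> u) < e"
    unfolding eventually_at_right_field
    by (rule exI[of _ b]) (use b close in auto)
qed

lemma hess_symmetric:
  fixes f :: "'a::euclidean_space \<Rightarrow> real"
  assumes "C2 f"
  shows "hess f x v \<bullet> u = hess f x u \<bullet> v"
proof -
  have d: "\<forall>x. f differentiable (at x)" "\<forall>x. grad f differentiable (at x)"
    and "continuous_on UNIV (\<lambda>x. hess f x v \<bullet> u)" "continuous_on UNIV (\<lambda>x. hess f x u \<bullet> v)"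
    using assms unfolding C2_def by auto
  note lim = this(3,4)[THEN second_difference_quotient_tendsto_hess[OF d]]
  have swap: "(\<lambda>t. (f (x + t *\<^sub>R v + t *\<^sub>R u) - f (x + t *\<^sub>R v) - f (x + t *\<^sub>R u) + f x) / (t * t))
      = (\<lambda>t. (f (x + t *\<^sub>R u + t *\<^sub>R v) - f (x + t *\<^sub>R u) - f (x + t *\<^sub>R v) + f x) / (t * t))"
    by (simp add: algebra_simps)
  from lim(2)[of x] have "((\<lambda>t. (f (x + t *\<^sub>R u + t *\<^sub>R v) - f (x + t *\<^sub>R u) - f (x + t *\<^sub>R v) + f x)
      / (t * t)) \<longlongrightarrow> hess f x u \<bullet> v) (at_right 0)"
    unfolding swap .
  with lim(1)[of x] show ?thesis by (rule tendsto_unique[rotated]) simp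
qed

text \<open>The quadratic form of \<open>B = H\<^sup>-\<^sup>1\<close> at \<open>w = B z\<close> is estimated through
  \<open>0 \<le> (w - z/c) \<bullet> B (w - z/c)\<close>.\<close>
lemma ge_scalar_right_inverse:
  fixes H B :: "'a::euclidean_space \<Rightarrow> 'a" and c :: real
  assumes lB: "linear B" and symB: "\<And>x y. B x \<bullet> y = B y \<bullet> x"
    and HB: "\<And>k. H (B k) = k"
    and psd: "\<And>v. 0 \<le> v \<bullet> H v" and le: "le_scalar H c" and c: "0 < c"
  shows "ge_scalar B (1 / c)"
  unfolding ge_scalar_def
proof
  fix w
  have "inj B" by (metis HB injI)
  then obtain z where z: "B z = w"
    using linear_injective_imp_surjective[OF lB] by (metis surjE)
  define s where "s = 1 / c"
  have zb: "z \<bullet> B z \<le> c * (w \<bullet> w)"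
    using le HB[of z] z unfolding le_scalar_def by (metis inner_commute)
  have zw: "z \<bullet> B w = w \<bullet> w" using symB[of w z] z by (simp add: inner_commute)
  have "0 \<le> B (w - s *\<^sub>R z) \<bullet> H (B (w - s *\<^sub>R z))" by (rule psd)
  also have "\<dots> = (w - s *\<^sub>R z) \<bullet> B (w - s *\<^sub>R z)" by (simp add: HB inner_commute)
  also have "\<dots> = w \<bullet> B w - s * (w \<bullet> B z) - s * (z \<bullet> B w) + s * s * (z \<bullet> B z)"
    by (simp add: linear_diff[OF lB] linear_cmul[OF lB] inner_diff_left inner_diff_right algebra_simps)
  also have "\<dots> = w \<bullet> B w - 2 * s * (w \<bullet> w) + s * s * (z \<bullet> B z)"
    using z zw by simp
  also have "\<dots> \<le> w \<bullet> B w - 2 * s * (w \<bullet> w) + s * s * (c * (w \<bullet> w))"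
    using zb by (intro add_left_mono mult_left_mono) auto
  also have "\<dots> = w \<bullet> B w - s * (w \<bullet> w)"
    unfolding s_def using c by (simp add: field_simps)
  finally show "1 / c * (w \<bullet> w) \<le> w \<bullet> B w" unfolding s_def by simp
qed

lemma block_form_lower_bound:
  fixes h k :: "'a::real_inner" and t gI gv a b :: real
  assumes "0 < gv" "gv < t" "t < gI"
    and "gI * (h \<bullet> h) \<le> a" and "(1 / gv) * (k \<bullet> k) \<le> b"
  shows "min (gI - t) (1 / gv - 1 / t) * (h \<bullet> h + k \<bullet> k) \<le> a + 2 * (h \<bullet> k) + b"
proof -
  have t: "0 < t" using assms by simp
  have "0 \<le> (t *\<^sub>R h + k) \<bullet> (t *\<^sub>R h + k) / t" using t by simp
  also have "\<dots> = t * (h \<bullet> h) + 2 * (h \<bullet> k) + (1 / t) * (k \<bullet> k)"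
    using t by (simp add: inner_add_left inner_add_right inner_commute field_simps)
  finally have cross: "- t * (h \<bullet> h) - (1 / t) * (k \<bullet> k) \<le> 2 * (h \<bullet> k)" by simp
  have "min (gI - t) (1 / gv - 1 / t) * (h \<bullet> h + k \<bullet> k)
      \<le> (gI - t) * (h \<bullet> h) + (1 / gv - 1 / t) * (k \<bullet> k)"
    by (simp add: distrib_left add_mono mult_right_mono)
  also have "\<dots> \<le> a + 2 * (h \<bullet> k) + b"
    using assms(4,5) cross by (simp add: algebra_simps)
  finally show ?thesis .
qed

lemma hess_conjugate_right_inverse:
  fixes \<Sigma> G :: "'a::euclidean_space \<Rightarrow> real"
  assumes "\<forall>x. grad \<Sigma> differentiable (at x)" and "grad G differentiable (at \<tau>)"
    and conj: "\<forall>t. grad \<Sigma> (- grad G t) = - t"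
  shows "hess \<Sigma> (- grad G \<tau>) (hess G \<tau> k) = k"
proof -
  have "((\<lambda>t. - grad G t) has_derivative (\<lambda>k. - hess G \<tau> k)) (at \<tau>)"
    using has_derivative_hess assms(2) by (auto intro: has_derivative_minus)
  then have "((\<lambda>t. grad \<Sigma> (- grad G t)) has_derivative
      (\<lambda>k. hess \<Sigma> (- grad G \<tau>) (- hess G \<tau> k))) (at \<tau>)"
    using has_derivative_compose has_derivative_hess assms(1) by blast
  then have "((\<lambda>t. - t) has_derivative (\<lambda>k. hess \<Sigma> (- grad G \<tau>) (- hess G \<tau> k))) (at \<tau>)"
    using conj by simp
  moreover have "((\<lambda>t. - t) has_derivative (\<lambda>k. - k)) (at \<tau>)"
    by (auto intro!: derivative_eq_intros)
  ultimately have "hess \<Sigma> (- grad G \<tau>) (- hess G \<tau> k) = - k"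
    using has_derivative_unique by metis
  moreover have "linear (hess \<Sigma> (- grad G \<tau>))" using linear_hess assms(1) by blast
  ultimately show ?thesis by (simp add: linear_neg)
qed

lemma ge_scalar_hess_conjugate:
  fixes \<Sigma> G :: "'a::euclidean_space \<Rightarrow> real"
  assumes "\<forall>x. grad \<Sigma> differentiable (at x)" and "C2 G"
    and "\<forall>t. grad \<Sigma> (- grad G t) = - t"
    and "\<forall>x. pos_def (hess \<Sigma> x)" and "\<forall>x. le_scalar (hess \<Sigma> x) c" and "0 < c"
  shows "ge_scalar (hess G \<tau>) (1 / c)"
proof (rule ge_scalar_right_inverse)
  show "linear (hess G \<tau>)" using linear_hess C2_differentiable(2)[OF assms(2)] .
  show "hess G \<tau> x \<bullet> y = hess G \<tau> y \<bullet> x" for x y using hess_symmetric[OF assms(2)] .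
  show "hess \<Sigma> (- grad G \<tau>) (hess G \<tau> k) = k" for k
    using hess_conjugate_right_inverse assms(1,3) C2_differentiable(2)[OF assms(2)] by blast
  show "0 \<le> v \<bullet> hess \<Sigma> (- grad G \<tau>) v" for v
    using assms(4) unfolding pos_def_def by (cases "v = 0") (auto simp: less_imp_le)
qed (use assms(5,6) in auto)

lemma hess_coupled_sum:
  fixes f g :: "'a::euclidean_space \<Rightarrow> real"
  assumes f: "C2 f" and g: "C2 g"
  shows "hess (\<lambda>z. f (fst z) + fst z \<bullet> snd z + g (snd z)) z
    = (\<lambda>d. (hess f (fst z) (fst d) + snd d, fst d + hess g (snd z) (snd d)))"
proof -
  let ?P = "\<lambda>z. f (fst z) + fst z \<bullet> snd z + g (snd z)"
  note fst' = has_derivative_fst[OF has_derivative_ident]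
    and snd' = has_derivative_snd[OF has_derivative_ident]
  have "grad ?P y = (grad f (fst y) + snd y, fst y + grad g (snd y))" for y
  proof (rule grad_eqI)
    have "(?P has_derivative (\<lambda>d. grad f (fst y) \<bullet> fst d + (fst y \<bullet> snd d + fst d \<bullet> snd y)
        + grad g (snd y) \<bullet> snd d)) (at y)"
      by (intro has_derivative_add has_derivative_inner fst' snd'
          has_derivative_compose[OF fst' has_derivative_grad[OF C2_differentiable(1)[OF f]]]
          has_derivative_compose[OF snd' has_derivative_grad[OF C2_differentiable(1)[OF g]]])
    moreover have "(\<lambda>d. grad f (fst y) \<bullet> fst d + (fst y \<bullet> snd d + fst d \<bullet> snd y) + grad g (snd y) \<bullet> snd d)
        = (\<lambda>d. (grad f (fst y) + snd y, fst y + grad g (snd y)) \<bullet> d)"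
      by (simp add: inner_prod_def inner_commute algebra_simps)
    ultimately show "(?P has_derivative (\<lambda>d. (grad f (fst y) + snd y, fst y + grad g (snd y)) \<bullet> d)) (at y)"
      by simp
  qed
  then have grad_P: "grad ?P = (\<lambda>y. (grad f (fst y) + snd y, fst y + grad g (snd y)))"
    by (rule ext)
  have "((\<lambda>y. (grad f (fst y) + snd y, fst y + grad g (snd y))) has_derivative
      (\<lambda>d. (hess f (fst z) (fst d) + snd d, fst d + hess g (snd z) (snd d)))) (at z)"
    by (intro has_derivative_Pair has_derivative_add fst' snd'
        has_derivative_compose[OF fst' has_derivative_hess[OF C2_differentiable(2)[OF f]]]
        has_derivative_compose[OF snd' has_derivative_hess[OF C2_differentiable(2)[OF g]]])
  then show ?thesis unfolding hess_def grad_P by (rule frechet_derivative_at[symmetric])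
qed

lemma ge_scalar_hess_coupled_sum:
  fixes f g :: "'a::euclidean_space \<Rightarrow> real" and gI gv :: real
  assumes "C2 f" "C2 g" "0 < gv" "gv < gI"
    and "\<forall>x. ge_scalar (hess f x) gI" and "\<forall>x. ge_scalar (hess g x) (1 / gv)"
  shows "\<exists>\<delta>>0. \<forall>p. ge_scalar (hess (\<lambda>z. f (fst z) + fst z \<bullet> snd z + g (snd z)) p) \<delta>"
proof (intro exI conjI allI)
  define t where "t = (gI + gv) / 2"
  have t: "gv < t" "t < gI" using assms(4) by (simp_all add: t_def)
  have "1 / t < 1 / gv" using t assms(3) by (intro divide_strict_left_mono) auto
  then show "0 < min (gI - t) (1 / gv - 1 / t)" using t by simp
  show "ge_scalar (hess (\<lambda>z. f (fst z) + fst z \<bullet> snd z + g (snd z)) p) (min (gI - t) (1 / gv - 1 / t))"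
    for p
    unfolding ge_scalar_def hess_coupled_sum[OF assms(1,2)]
  proof (clarsimp simp: inner_add_right)
    fix h k
    have "min (gI - t) (1 / gv - 1 / t) * (h \<bullet> h + k \<bullet> k)
        \<le> h \<bullet> hess f (fst p) h + 2 * (h \<bullet> k) + k \<bullet> hess g (snd p) k"
      using assms(5,6) unfolding ge_scalar_def
      by (intro block_form_lower_bound[OF assms(3) t]) auto
    then show "min (gI - t) (1 / gv - 1 / t) * (h \<bullet> h + k \<bullet> k)
        \<le> h \<bullet> hess f (fst p) h + h \<bullet> k + (k \<bullet> h + k \<bullet> hess g (snd p) k)"
      by (simp add: inner_commute)
  qed
qed

theorem lemma3p2:
  fixes \<sigma>I \<sigma>E G :: "real^'n \<Rightarrow> real" and \<gamma>I \<gamma>v :: real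
  assumes "C2 \<sigma>I" and "C2 \<sigma>E"
    and "\<forall>\<Xi>. pos_def (hess (\<lambda>x. \<sigma>I x - \<sigma>E x) \<Xi>)"
    and "surj (grad (\<lambda>x. \<sigma>I x - \<sigma>E x))"
    and "C2 G"
    and "\<forall>\<tau>. grad G \<tau> = - inv (grad (\<lambda>x. \<sigma>I x - \<sigma>E x)) (- \<tau>)"
    and "0 < \<gamma>v" and "\<gamma>v < \<gamma>I"
    and "\<forall>\<Xi>. ge_scalar (hess \<sigma>I \<Xi>) \<gamma>I"
    and "\<forall>\<Xi>. le_scalar (hess (\<lambda>x. \<sigma>I x - \<sigma>E x) \<Xi>) \<gamma>v"
  shows "\<exists>\<delta>>0. \<forall>p :: (real^'n) \<times> (real^'n).
           ge_scalar (hess (\<lambda>z. \<sigma>I (fst z) + fst z \<bullet> snd z + G (snd z)) p) \<delta>"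
proof -
  let ?\<Sigma> = "\<lambda>x. \<sigma>I x - \<sigma>E x"
  have "grad ?\<Sigma> = (\<lambda>x. grad \<sigma>I x - grad \<sigma>E x)"
    by (intro ext grad_diff C2_differentiable(1) assms(1,2))
  then have "\<forall>x. grad ?\<Sigma> differentiable (at x)"
    using C2_differentiable(2) assms(1,2) by (auto intro!: differentiable_diff)
  moreover have "\<forall>\<tau>. grad ?\<Sigma> (- grad G \<tau>) = - \<tau>"
    using assms(4,6) by (simp add: surj_f_inv_f)
  ultimately have "\<forall>\<tau>. ge_scalar (hess G \<tau>) (1 / \<gamma>v)"
    using ge_scalar_hess_conjugate[OF _ assms(5) _ assms(3,10,7)] by blast
  then show ?thesis by (rule ge_scalar_hess_coupled_sum[OF assms(1,5,7,8,9)])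
qed

end
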